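(* Let $\gamma<1$ and assume that the right end point of the support of $\mu$ is $b=\frac{1}{1-\gamma}$. Let $a$ be the left end point of the support of $\mu$. Then, for each $x_0>0$, $$\lim_{t\uparrow\infty}\frac{r(x_0,t)}{x_0}=a.$$ Furthermore, with $\Delta(x_0,t):=\frac{h^{(-1)}(x_0,t)}{t}-\frac a2$, define $$G(x_0,t):=\begin{cases}\displaystyle\int_{[a,\frac{1}{1-\gamma}]}(y-a)\,e^{-ty\frac{y-a}{2}}\,\mu(dy), & \Delta(x_0,t)<0,\\[2ex] \displaystyle 2\Delta(x_0,t)\,x_0+\int_{[a+2\Delta(x_0,t),\frac{1}{1-\gamma}]}(y-a)\,e^{ty\frac{2\Delta(x_0,t)+a-y}{2}}\,\mu(dy), & \Delta(x_0,t)>0.\end{cases}$$ Then $\lim_{t\uparrow\infty}G(x_0,t)=0$, and for $t$ large enough, $$0\le r(x_0,t)-a x_0\le G(x_0,t).$$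
   Context: Let $\mu$ be a nonzero finite positive Borel measure on $(0,\infty)$ such that $\int y e^{yz}\mu(dy)<\infty$ for every $z\in\mathbb{R}$. Let $a:=\inf\{y\ge 0:\mu((0,y])>0\}$ and $b:=\inf\{y>0:\mu((y,\infty))=0\}$ denote the end points of its support. Define $h(z,t):=\int e^{yz-\frac12 y^2 t}\mu(dy)$ for $(z,t)\in\mathbb{R}\times[0,\infty)$. For each $t$, the map $z\mapsto h(z,t)$ is smooth and strictly increasing with range $(0,\infty)$, and $h_t+\frac12 h_{zz}=0$. $h^{(-1)}(x,t)$ denotes its inverse in $z$. Let $u:(0,\infty)\times[0,\infty)\to\mathbb{R}$ be smooth, strictly increasing and strictly concave in $x$, solving $u_t=\frac12 u_x^2/u_{xx}$, and related to $h$ by $u_x(h(z,t),t)=e^{-z+t/2}$ for all $(z,t)$. The risk tolerance function is $r(x,t):=-u_x(x,t)/u_{xx}(x,t)$. Equivalently, $$r(x,t)=h_z(h^{(-1)}(x,t),t)=\int y\,e^{y h^{(-1)}(x,t)-\frac12 y^2 t}\mu(dy).$$ *)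

theory Defs
  imports "HOL-Analysis.Analysis"
begin

definition supp_left :: "real measure \<Rightarrow> real" where
  "supp_left \<mu> = Inf {y. 0 \<le> y \<and> measure \<mu> {0<..y} > 0}"

text \<open>Right end point of the support of mu, as an extended real (infinity if the
  support is unbounded): inf of y > 0 with mu((y,infinity)) = 0.\<close>
definition supp_right :: "real measure \<Rightarrow> ereal" where
  "supp_right \<mu> = Inf {ereal y | y. 0 < y \<and> emeasure \<mu> {y<..} = 0}"

definition hfun :: "real measure \<Rightarrow> real \<Rightarrow> real \<Rightarrow> real" where
  "hfun \<mu> z t = (\<integral>y. exp (y * z - y\<^sup>2 * t / 2) \<partial>\<mu>)"

definition hinv :: "real measure \<Rightarrow> real \<Rightarrow> real \<Rightarrow> real" where
  "hinv \<mu> x t = (THE z. hfun \<mu> z t = x)"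

text \<open>Risk tolerance r(x,t) = h_z(h^{-1}(x,t),t).\<close>
definition risk_tol :: "real measure \<Rightarrow> real \<Rightarrow> real \<Rightarrow> real" where
  "risk_tol \<mu> x t = (\<integral>y. y * exp (y * hinv \<mu> x t - y\<^sup>2 * t / 2) \<partial>\<mu>)"

definition Delta :: "real measure \<Rightarrow> real \<Rightarrow> real \<Rightarrow> real" where
  "Delta \<mu> x0 t = hinv \<mu> x0 t / t - supp_left \<mu> / 2"

text \<open>G(x0,t); the two cases of the paper coincide when Delta = 0.\<close>
definition Gfun :: "real measure \<Rightarrow> real \<Rightarrow> real \<Rightarrow> real \<Rightarrow> real" where
  "Gfun \<mu> \<gamma> x0 t =
    (let a = supp_left \<mu>; D = Delta \<mu> x0 t in
     if D \<le> 0 then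
       (\<integral>y\<in>{a..1/(1-\<gamma>)}. (y - a) * exp (- t * y * (y - a) / 2) \<partial>\<mu>)
     else
       2 * D * x0 + (\<integral>y\<in>{a + 2*D..1/(1-\<gamma>)}. (y - a) * exp (t * y * (2*D + a - y) / 2) \<partial>\<mu>))"

end

theory Submission
  imports Defs "HOL-Real_Asymp.Real_Asymp"
begin

(*
  Write z = h^{-1}(x, t) = t (a/2 + Delta). Completing the square gives
  y z - y^2 t/2 = t y (2 Delta + a - y)/2, so h(z,t) = x and
  r(x,t) - a x = int (y - a) exp (t y (2 Delta + a - y)/2) mu(dy) >= 0.
  Splitting the integral at y = a + 2 Delta bounds this by G(x,t), and G is in turn at most
  max Delta 0 * (2 x + 4 mu(R)) + int (y - a) exp (- t y (y - a)/4) mu(dy).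
  The last integral vanishes as t -> oo by dominated convergence (mu has bounded support).
  Finally lim sup Delta <= 0: if Delta >= delta, the mass of mu on [eta, a + delta] alone
  would force h(z,t) >= c exp (t eta delta/2) > x for large t.
*)

lemma AE_le_of_AE_le_greater:
  fixes f :: "'a \<Rightarrow> real"
  assumes "\<And>c. b < c \<Longrightarrow> AE x in M. P x \<longrightarrow> f x \<le> c"
  shows "AE x in M. P x \<longrightarrow> f x \<le> b"
proof -
  have "AE x in M. \<forall>n. P x \<longrightarrow> f x \<le> b + inverse (Suc n)"
    by (subst AE_all_countable) (simp add: assms)
  then show ?thesis
    by eventually_elim (auto intro: LIMSEQ_le_const[OF LIMSEQ_inverse_real_of_nat_add])
qed

lemma AE_le_supp_right:
  assumes "sets \<mu> = sets borel" and "supp_right \<mu> = ereal b"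
  shows "AE y in \<mu>. y \<le> b"
proof -
  have "AE y in \<mu>. True \<longrightarrow> y \<le> c" if "b < c" for c
  proof -
    have "supp_right \<mu> < ereal c" using that assms(2) by simp
    then obtain y\<^sub>0 where "emeasure \<mu> {y\<^sub>0<..} = 0" and "y\<^sub>0 < c"
      unfolding supp_right_def Inf_less_iff by auto
    then have "AE y in \<mu>. y \<notin> {y\<^sub>0<..}" using assms(1) by (intro AE_not_in null_setsI) auto
    then show ?thesis by eventually_elim (use \<open>y\<^sub>0 < c\<close> in auto)
  qed
  from AE_le_of_AE_le_greater[OF this] show ?thesis by simp
qed

lemma measure_Ioc_eq_0_below_supp_left:
  assumes "d < supp_left \<mu>"
  shows "measure \<mu> {0<..d} = 0"
proof (cases "0 \<le> d")
  case True
  show ?thesis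
  proof (rule ccontr)
    assume "measure \<mu> {0<..d} \<noteq> 0"
    then have "d \<in> {y. 0 \<le> y \<and> 0 < measure \<mu> {0<..y}}"
      using True by (simp add: order_less_le)
    then have "supp_left \<mu> \<le> d"
      unfolding supp_left_def by (rule cInf_lower) (auto intro: bdd_belowI[of _ 0])
    with assms show False by simp
  qed
qed simp

lemma quadratic_exponent_le:
  fixes y z t b :: real
  assumes "0 < y" and "y \<le> b"
  shows "y * z - y\<^sup>2 * t / 2 \<le> b * \<bar>z\<bar> + b\<^sup>2 * \<bar>t\<bar>"
proof -
  have "y * z \<le> b * \<bar>z\<bar>"
    using assms mult_mono[of y b "\<bar>z\<bar>" "\<bar>z\<bar>"] abs_ge_self[of z] mult_left_mono[of z "\<bar>z\<bar>" y]
    by linarith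
  moreover have "\<bar>y\<^sup>2 * t\<bar> \<le> b\<^sup>2 * \<bar>t\<bar>"
    using assms by (simp add: abs_mult mult_right_mono power_mono)
  ultimately show ?thesis by simp
qed

lemma mult_exp_shifted_le:
  fixes a y t D :: real
  assumes "0 < D" and "0 \<le> t" and "0 \<le> y" and "a + 2 * D \<le> y"
  shows "(y - a) * exp (t * y * (2 * D + a - y) / 2) \<le> 4 * D + (y - a) * exp (- t * y * (y - a) / 4)"
proof (cases "a + 4 * D \<le> y")
  case True
  have "t * y * (2 * D + a - y) \<le> t * y * (- (y - a) / 2)"
    using True assms by (intro mult_left_mono) auto
  also have "\<dots> = - t * y * (y - a) / 2" by (simp add: algebra_simps)
  finally have "t * y * (2 * D + a - y) / 2 \<le> - t * y * (y - a) / 4" by linarith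
  then have "(y - a) * exp (t * y * (2 * D + a - y) / 2) \<le> (y - a) * exp (- t * y * (y - a) / 4)"
    using assms by (intro mult_left_mono) simp_all
  moreover have "0 \<le> 4 * D" using assms by simp
  ultimately show ?thesis by linarith
next
  case False
  have "t * y * (2 * D + a - y) \<le> 0"
    using assms by (intro mult_nonneg_nonpos) auto
  then have "(y - a) * exp (t * y * (2 * D + a - y) / 2) \<le> (y - a) * 1"
    using assms by (intro mult_left_mono) auto
  moreover have "0 \<le> (y - a) * exp (- t * y * (y - a) / 4)" using assms by simp
  ultimately show ?thesis using False by simp
qed

lemma decay_integrand_bound:
  fixes a b c t y :: real
  assumes "0 \<le> t" and "0 < c" and "0 < y" and "a \<le> y" and "y \<le> b"
  shows "\<bar>(y - a) * exp (- t * y * (y - a) / c)\<bar> \<le> b - a"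
proof -
  have "exp (- t * y * (y - a) / c) \<le> 1"
    using assms by (simp add: divide_nonneg_pos)
  then have "(y - a) * exp (- t * y * (y - a) / c) \<le> (y - a) * 1"
    using assms by (intro mult_left_mono) simp_all
  then show ?thesis using assms by simp
qed

lemma (in finite_measure) tendsto_integral_at_top_zero:
  fixes f :: "real \<Rightarrow> 'a \<Rightarrow> real"
  assumes "\<And>s. f s \<in> borel_measurable M"
    and "AE x in M. ((\<lambda>s. f s x) \<longlongrightarrow> 0) at_top"
    and "\<And>s. 0 \<le> s \<Longrightarrow> AE x in M. \<bar>f s x\<bar> \<le> B"
  shows "((\<lambda>s. \<integral>x. f s x \<partial>M) \<longlongrightarrow> 0) at_top"
proof -
  have "((\<lambda>s. \<integral>x. f s x \<partial>M) \<longlongrightarrow> (\<integral>x. 0 \<partial>M)) at_top"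
  proof (rule integral_dominated_convergence_at_top[where w="\<lambda>_. B"])
    show "\<forall>\<^sub>F s in at_top. AE x in M. norm (f s x) \<le> B"
      using eventually_ge_at_top[of 0] by eventually_elim (use assms(3) in auto)
  qed (use assms(1,2) in auto)
  then show ?thesis by simp
qed

locale positive_bounded_support = finite_measure \<mu> for \<mu> :: "real measure" +
  fixes b :: real
  assumes sets_eq_borel: "sets \<mu> = sets borel"
    and AE_support: "AE y in \<mu>. 0 < y \<and> y \<le> b"
    and nontrivial: "emeasure \<mu> (space \<mu>) \<noteq> 0"
begin

abbreviation a :: real where "a \<equiv> supp_left \<mu>"

lemma space_eq_UNIV [simp]: "space \<mu> = UNIV"
  using sets_eq_imp_space_eq[OF sets_eq_borel] by simp

lemma borel_measurable_eq: "borel_measurable \<mu> = borel_measurable borel"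
  by (rule measurable_cong_sets[OF sets_eq_borel refl])

lemma not_AE_False: "\<not> (AE y in \<mu>. False)"
  using ae_filter_eq_bot_iff[of \<mu>] nontrivial trivial_limit_def by metis

lemma AE_not_in_iff_measure_eq_0:
  assumes "A \<in> sets borel"
  shows "(AE y in \<mu>. y \<notin> A) \<longleftrightarrow> measure \<mu> A = 0"
  using AE_iff_measurable[of A \<mu> "\<lambda>y. y \<notin> A"] assms sets_eq_borel
  by (simp add: emeasure_eq_measure)

lemma b_pos: "0 < b"
proof -
  have "AE y in \<mu>. 0 < b" using AE_support by eventually_elim auto
  then show ?thesis using not_AE_False by (cases "0 < b") auto
qed

lemma AE_supp_left_le: "AE y in \<mu>. a \<le> y"
proof -
  have "AE y in \<mu>. True \<longrightarrow> - y \<le> c" if "- a < c" for c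
  proof -
    have "measure \<mu> {0<..- c} = 0"
      using that by (intro measure_Ioc_eq_0_below_supp_left) simp
    then have "AE y in \<mu>. y \<notin> {0<..- c}"
      using AE_not_in_iff_measure_eq_0[of "{0<..- c}"] by simp
    then show ?thesis using AE_support by eventually_elim auto
  qed
  from AE_le_of_AE_le_greater[of "- a", OF this] show ?thesis by simp
qed

lemma AE_in_support: "AE y in \<mu>. 0 < y \<and> a \<le> y \<and> y \<le> b"
  using AE_support AE_supp_left_le by eventually_elim auto

lemma measure_Icc_near_supp_left_pos:
  assumes "0 < \<delta>"
  shows "\<exists>\<eta>>0. 0 < measure \<mu> {\<eta>..a + \<delta>}"
proof (rule ccontr)
  assume no_mass: "\<not> (\<exists>\<eta>>0. 0 < measure \<mu> {\<eta>..a + \<delta>})"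
  define S where "S = {y. 0 \<le> y \<and> 0 < measure \<mu> {0<..y}}"
  have "b \<in> S"
  proof -
    have "\<not> (AE y in \<mu>. y \<notin> {0<..b})"
    proof
      assume "AE y in \<mu>. y \<notin> {0<..b}"
      then have "AE y in \<mu>. False" using AE_support by eventually_elim auto
      then show False using not_AE_False by simp
    qed
    then show ?thesis
      using b_pos AE_not_in_iff_measure_eq_0[of "{0<..b}"] by (simp add: S_def order_less_le)
  qed
  moreover have "bdd_below S" unfolding S_def by (rule bdd_belowI[of _ 0]) auto
  moreover have "Inf S < a + \<delta>" using assms by (simp add: supp_left_def S_def)
  ultimately obtain s where "s \<in> S" and "s < a + \<delta>"
    using cInf_less_iff[of S] by (metis empty_iff)
  have null_between: "AE y in \<mu>. y \<le> s \<longrightarrow> y \<le> \<eta>" if "0 < \<eta>" for \<eta>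
  proof -
    have "measure \<mu> {\<eta>..s} \<le> measure \<mu> {\<eta>..a + \<delta>}"
      using \<open>s < a + \<delta>\<close> sets_eq_borel by (intro finite_measure_mono) auto
    moreover have "\<not> 0 < measure \<mu> {\<eta>..a + \<delta>}" using no_mass that by blast
    ultimately have "measure \<mu> {\<eta>..s} = 0" using measure_nonneg[of \<mu> "{\<eta>..s}"] by linarith
    then have "AE y in \<mu>. y \<notin> {\<eta>..s}" using AE_not_in_iff_measure_eq_0[of "{\<eta>..s}"] by simp
    then show ?thesis by eventually_elim auto
  qed
  have "AE y in \<mu>. y \<le> s \<longrightarrow> y \<le> 0"
    by (rule AE_le_of_AE_le_greater) (rule null_between)
  then have "AE y in \<mu>. y \<notin> {0<..s}" by eventually_elim auto
  then show False using \<open>s \<in> S\<close> AE_not_in_iff_measure_eq_0[of "{0<..s}"] by (simp add: S_def)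
qed

lemma integrable_bounded_on_support:
  fixes f :: "real \<Rightarrow> real"
  assumes "f \<in> borel_measurable borel"
    and "\<And>y. 0 < y \<Longrightarrow> a \<le> y \<Longrightarrow> y \<le> b \<Longrightarrow> \<bar>f y\<bar> \<le> B"
  shows "integrable \<mu> f"
proof (rule integrable_const_bound[where B=B])
  show "AE y in \<mu>. norm (f y) \<le> B" using AE_in_support by eventually_elim (simp add: assms(2))
qed (use assms(1) in \<open>simp add: borel_measurable_eq\<close>)

lemma integrable_hfun_integrand: "integrable \<mu> (\<lambda>y. exp (y * z - y\<^sup>2 * t / 2))"
proof (rule integrable_bounded_on_support[where B="exp (b * \<bar>z\<bar> + b\<^sup>2 * \<bar>t\<bar>)"])
  fix y assume "0 < y" "a \<le> y" "y \<le> b"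
  then show "\<bar>exp (y * z - y\<^sup>2 * t / 2)\<bar> \<le> exp (b * \<bar>z\<bar> + b\<^sup>2 * \<bar>t\<bar>)"
    using quadratic_exponent_le[of y b z t] by simp
qed simp

lemma integrable_risk_tol_integrand: "integrable \<mu> (\<lambda>y. y * exp (y * z - y\<^sup>2 * t / 2))"
proof (rule integrable_bounded_on_support[where B="b * exp (b * \<bar>z\<bar> + b\<^sup>2 * \<bar>t\<bar>)"])
  fix y assume "0 < y" "a \<le> y" "y \<le> b"
  moreover have "exp (y * z - y\<^sup>2 * t / 2) \<le> exp (b * \<bar>z\<bar> + b\<^sup>2 * \<bar>t\<bar>)"
    using calculation quadratic_exponent_le[of y b z t] by simp
  ultimately show "\<bar>y * exp (y * z - y\<^sup>2 * t / 2)\<bar> \<le> b * exp (b * \<bar>z\<bar> + b\<^sup>2 * \<bar>t\<bar>)"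
    by (simp add: mult_mono)
qed simp

lemma hfun_strict_mono:
  assumes "z < z'"
  shows "hfun \<mu> z t < hfun \<mu> z' t"
  unfolding hfun_def
proof (rule integral_less_AE_space[OF integrable_hfun_integrand integrable_hfun_integrand _ nontrivial])
  show "AE y in \<mu>. exp (y * z - y\<^sup>2 * t / 2) < exp (y * z' - y\<^sup>2 * t / 2)"
    using AE_support by eventually_elim (use assms in auto)
qed

lemma convex_on_hfun: "convex_on UNIV (\<lambda>z. hfun \<mu> z t)"
proof (rule convex_onI)
  fix u z z' :: real assume "0 < u" "u < 1"
  let ?E = "\<lambda>z y. y * z - y\<^sup>2 * t / 2"
  have E_affine: "?E ((1 - u) * z + u * z') y = (1 - u) * ?E z y + u * ?E z' y" for y
    by (simp add: field_simps)
  then have "hfun \<mu> ((1 - u) *\<^sub>R z + u *\<^sub>R z') t = (\<integral>y. exp ((1 - u) * ?E z y + u * ?E z' y) \<partial>\<mu>)"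
    by (simp add: hfun_def)
  also have "\<dots> \<le> (\<integral>y. (1 - u) * exp (?E z y) + u * exp (?E z' y) \<partial>\<mu>)"
  proof (rule integral_mono)
    show "integrable \<mu> (\<lambda>y. exp ((1 - u) * ?E z y + u * ?E z' y))"
      using integrable_hfun_integrand[of "(1 - u) * z + u * z'" t] by (simp add: E_affine)
    show "integrable \<mu> (\<lambda>y. (1 - u) * exp (?E z y) + u * exp (?E z' y))"
      by (intro Bochner_Integration.integrable_add integrable_mult_right integrable_hfun_integrand)
    show "exp ((1 - u) * ?E z y + u * ?E z' y) \<le> (1 - u) * exp (?E z y) + u * exp (?E z' y)" for y
      using convex_onD[OF exp_convex, of u "?E z y" "?E z' y"] \<open>0 < u\<close> \<open>u < 1\<close> by simp
  qed
  also have "\<dots> = (1 - u) * hfun \<mu> z t + u * hfun \<mu> z' t"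
    unfolding hfun_def by (simp add: integrable_hfun_integrand)
  finally show "hfun \<mu> ((1 - u) *\<^sub>R z + u *\<^sub>R z') t \<le> (1 - u) * hfun \<mu> z t + u * hfun \<mu> z' t" .
qed simp

lemma continuous_on_hfun: "continuous_on UNIV (\<lambda>z. hfun \<mu> z t)"
  by (rule convex_on_continuous[OF open_UNIV convex_on_hfun])

lemma hfun_ge_measure_mult_exp:
  assumes "\<And>y. \<eta> \<le> y \<Longrightarrow> y \<le> B \<Longrightarrow> K \<le> y * z - y\<^sup>2 * t / 2"
  shows "measure \<mu> {\<eta>..B} * exp K \<le> hfun \<mu> z t"
proof -
  have "measure \<mu> {\<eta>..B} * exp K = (\<integral>y. indicator {\<eta>..B} y * exp K \<partial>\<mu>)" by simp
  also have "\<dots> \<le> hfun \<mu> z t" unfolding hfun_def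
  proof (rule integral_mono[OF _ integrable_hfun_integrand])
    show "integrable \<mu> (\<lambda>y. indicator {\<eta>..B} y * exp K)"
      by (rule integrable_bounded_on_support[where B="exp K"]) (auto split: split_indicator)
    show "indicator {\<eta>..B} y * exp K \<le> exp (y * z - y\<^sup>2 * t / 2)" for y
      using assms by (auto split: split_indicator)
  qed
  finally show ?thesis .
qed

lemma exists_hfun_less:
  assumes "0 \<le> t" and "0 < x"
  shows "\<exists>z. hfun \<mu> z t < x"
proof -
  have "((\<lambda>s. hfun \<mu> (- s) t) \<longlongrightarrow> 0) at_top"
    unfolding hfun_def
  proof (rule tendsto_integral_at_top_zero[where B=1])
    show "AE y in \<mu>. ((\<lambda>s. exp (y * - s - y\<^sup>2 * t / 2)) \<longlongrightarrow> 0) at_top"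
      using AE_support by eventually_elim real_asymp
    show "AE y in \<mu>. \<bar>exp (y * - s - y\<^sup>2 * t / 2)\<bar> \<le> 1" if "0 \<le> s" for s
      using AE_support
    proof eventually_elim
      case (elim y)
      then have "0 \<le> y * s" and "0 \<le> y\<^sup>2 * t" using that assms(1) by simp_all
      then show ?case by simp
    qed
  qed (simp add: borel_measurable_eq)
  then have "\<forall>\<^sub>F s in at_top. hfun \<mu> (- s) t < x" using assms(2) by (rule order_tendstoD)
  then show ?thesis by (meson eventually_happens' trivial_limit_at_top_linorder)
qed

lemma exists_hfun_greater:
  assumes "0 \<le> t"
  shows "\<exists>z. x < hfun \<mu> z t"
proof -
  obtain \<eta> where "0 < \<eta>" and "0 < measure \<mu> {\<eta>..a + 1}"
    using measure_Icc_near_supp_left_pos[of 1] by auto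
  define c where "c = measure \<mu> {\<eta>..a + 1}"
  have "0 < c" by (simp add: c_def \<open>0 < measure \<mu> {\<eta>..a + 1}\<close>)
  have "filterlim (\<lambda>z. c * exp (\<eta> * z - (a + 1)\<^sup>2 * t / 2)) at_top at_top"
    using \<open>0 < \<eta>\<close> \<open>0 < c\<close> by real_asymp
  then have "\<forall>\<^sub>F z in at_top. x < c * exp (\<eta> * z - (a + 1)\<^sup>2 * t / 2) \<and> 0 \<le> z"
    by (auto simp: filterlim_at_top_dense intro: eventually_conj eventually_ge_at_top)
  then obtain z where x_less: "x < c * exp (\<eta> * z - (a + 1)\<^sup>2 * t / 2)" and "0 \<le> z"
    unfolding eventually_at_top_linorder by (metis order_refl)
  have "c * exp (\<eta> * z - (a + 1)\<^sup>2 * t / 2) \<le> hfun \<mu> z t"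
    unfolding c_def
  proof (rule hfun_ge_measure_mult_exp)
    fix y assume "\<eta> \<le> y" "y \<le> a + 1"
    then have "\<eta> * z \<le> y * z" using \<open>0 \<le> z\<close> by (intro mult_right_mono) simp_all
    moreover have "y\<^sup>2 * t \<le> (a + 1)\<^sup>2 * t"
      using \<open>\<eta> \<le> y\<close> \<open>y \<le> a + 1\<close> \<open>0 < \<eta>\<close> assms by (intro mult_right_mono power_mono) simp_all
    ultimately show "\<eta> * z - (a + 1)\<^sup>2 * t / 2 \<le> y * z - y\<^sup>2 * t / 2" by simp
  qed
  with x_less show ?thesis by (blast intro: less_le_trans)
qed

lemma hfun_hinv:
  assumes "0 \<le> t" and "0 < x"
  shows "hfun \<mu> (hinv \<mu> x t) t = x"
proof -
  obtain z\<^sub>1 z\<^sub>2 where z\<^sub>1: "hfun \<mu> z\<^sub>1 t < x" and z\<^sub>2: "x < hfun \<mu> z\<^sub>2 t"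
    using exists_hfun_less[OF assms] exists_hfun_greater[OF assms(1)] by blast
  then have "z\<^sub>1 \<le> z\<^sub>2" using hfun_strict_mono[of z\<^sub>2 z\<^sub>1 t] by fastforce
  then obtain z where z: "hfun \<mu> z t = x"
    using IVT'[of "\<lambda>z. hfun \<mu> z t" z\<^sub>1 x z\<^sub>2] z\<^sub>1 z\<^sub>2 continuous_on_subset[OF continuous_on_hfun]
    by fastforce
  moreover have "z' = z" if "hfun \<mu> z' t = x" for z'
    using hfun_strict_mono[of z' z t] hfun_strict_mono[of z z' t] that z
    by (cases z' z rule: linorder_cases) auto
  ultimately have "hinv \<mu> x t = z" unfolding hinv_def by (rule the_equality)
  then show ?thesis using z by simp
qed

lemma hfun_exponent_Delta:
  assumes "t \<noteq> 0"
  shows "y * hinv \<mu> x t - y\<^sup>2 * t / 2 = t * y * (2 * Delta \<mu> x t + a - y) / 2"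
  using assms unfolding Delta_def by (simp add: field_simps power2_eq_square)

lemma integral_exp_Delta:
  assumes "0 < t" and "0 < x"
  shows "(\<integral>y. exp (t * y * (2 * Delta \<mu> x t + a - y) / 2) \<partial>\<mu>) = x"
proof -
  have "t \<noteq> 0" using assms(1) by simp
  then show ?thesis
    using hfun_hinv[of t x] assms unfolding hfun_def hfun_exponent_Delta[OF \<open>t \<noteq> 0\<close>] by simp
qed

lemma integrable_exp_Delta:
  assumes "t \<noteq> 0"
  shows "integrable \<mu> (\<lambda>y. exp (t * y * (2 * Delta \<mu> x t + a - y) / 2))"
  using integrable_hfun_integrand[of "hinv \<mu> x t" t] unfolding hfun_exponent_Delta[OF assms] .

lemma integrable_mult_exp_Delta:
  assumes "t \<noteq> 0"
  shows "integrable \<mu> (\<lambda>y. y * exp (t * y * (2 * Delta \<mu> x t + a - y) / 2))"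
  using integrable_risk_tol_integrand[of "hinv \<mu> x t" t] unfolding hfun_exponent_Delta[OF assms] .

lemma risk_tol_sub_eq:
  assumes "0 < t" and "0 < x"
  shows "risk_tol \<mu> x t - a * x = (\<integral>y. (y - a) * exp (t * y * (2 * Delta \<mu> x t + a - y) / 2) \<partial>\<mu>)"
proof -
  let ?E = "\<lambda>y. exp (t * y * (2 * Delta \<mu> x t + a - y) / 2)"
  have "t \<noteq> 0" using assms(1) by simp
  have "risk_tol \<mu> x t - a * x = (\<integral>y. y * ?E y \<partial>\<mu>) - (\<integral>y. a * ?E y \<partial>\<mu>)"
    unfolding risk_tol_def hfun_exponent_Delta[OF \<open>t \<noteq> 0\<close>] by (simp add: integral_exp_Delta[OF assms])
  also have "\<dots> = (\<integral>y. y * ?E y - a * ?E y \<partial>\<mu>)"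
    using integrable_exp_Delta[OF \<open>t \<noteq> 0\<close>] integrable_mult_exp_Delta[OF \<open>t \<noteq> 0\<close>]
    by (simp add: Bochner_Integration.integral_diff)
  finally show ?thesis by (simp add: left_diff_distrib)
qed

lemma risk_tol_sub_nonneg:
  assumes "0 < t" and "0 < x"
  shows "0 \<le> risk_tol \<mu> x t - a * x"
  unfolding risk_tol_sub_eq[OF assms]
  by (rule integral_nonneg_AE) (use AE_supp_left_le in \<open>eventually_elim, simp\<close>)

lemma integrable_decay_integrand:
  assumes "0 \<le> t" and "0 < c"
  shows "integrable \<mu> (\<lambda>y. (y - a) * exp (- t * y * (y - a) / c))"
proof (rule integrable_bounded_on_support[where B="b - a"])
  show "\<bar>(y - a) * exp (- t * y * (y - a) / c)\<bar> \<le> b - a" if "0 < y" "a \<le> y" "y \<le> b" for y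
    using decay_integrand_bound[OF assms that] .
qed simp

lemma integrable_sub_mult_exp_Delta:
  assumes "t \<noteq> 0"
  shows "integrable \<mu> (\<lambda>y. (y - a) * exp (t * y * (2 * Delta \<mu> x t + a - y) / 2))"
proof -
  have "integrable \<mu> (\<lambda>y. y * exp (t * y * (2 * Delta \<mu> x t + a - y) / 2)
      - a * exp (t * y * (2 * Delta \<mu> x t + a - y) / 2))"
    by (intro Bochner_Integration.integrable_diff integrable_mult_right
        integrable_mult_exp_Delta integrable_exp_Delta assms)
  then show ?thesis by (simp add: left_diff_distrib)
qed

lemma Gfun_bounds_of_Delta_nonpos:
  assumes "0 < t" and "0 < x" and "1 / (1 - \<gamma>) = b" and "Delta \<mu> x t \<le> 0"
  shows "risk_tol \<mu> x t - a * x \<le> Gfun \<mu> \<gamma> x t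
    \<and> Gfun \<mu> \<gamma> x t \<le> (\<integral>y. (y - a) * exp (- t * y * (y - a) / 4) \<partial>\<mu>)"
proof -
  let ?G = "\<lambda>y. indicator {a..b} y * ((y - a) * exp (- t * y * (y - a) / 2))"
  have G: "Gfun \<mu> \<gamma> x t = (\<integral>y. ?G y \<partial>\<mu>)"
    using assms(3,4) by (simp add: Gfun_def Let_def set_lebesgue_integral_def)
  have int_G: "integrable \<mu> ?G"
    using integrable_mult_indicator[of "{a..b}" \<mu>, OF _ integrable_decay_integrand[of t 2]] assms(1)
    by (simp add: sets_eq_borel)
  have "risk_tol \<mu> x t - a * x \<le> (\<integral>y. ?G y \<partial>\<mu>)"
    unfolding risk_tol_sub_eq[OF assms(1,2)]
  proof (rule integral_mono_AE[OF integrable_sub_mult_exp_Delta int_G])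
    show "AE y in \<mu>. (y - a) * exp (t * y * (2 * Delta \<mu> x t + a - y) / 2) \<le> ?G y"
      using AE_in_support
    proof eventually_elim
      case (elim y)
      have "t * y * Delta \<mu> x t \<le> 0"
        using elim assms(1,4) by (simp add: mult_nonneg_nonpos)
      then have "t * y * (2 * Delta \<mu> x t + a - y) / 2 \<le> - t * y * (y - a) / 2"
        by (simp add: field_simps)
      then show ?case using elim by (simp add: mult_left_mono)
    qed
  qed (use assms(1) in simp)
  moreover have "(\<integral>y. ?G y \<partial>\<mu>) \<le> (\<integral>y. (y - a) * exp (- t * y * (y - a) / 4) \<partial>\<mu>)"
  proof (rule integral_mono_AE[OF int_G integrable_decay_integrand])
    show "AE y in \<mu>. ?G y \<le> (y - a) * exp (- t * y * (y - a) / 4)"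
      using AE_in_support
    proof eventually_elim
      case (elim y)
      have "0 \<le> t * y * (y - a)" using elim assms(1) by simp
      then have "- t * y * (y - a) / 2 \<le> - t * y * (y - a) / 4" by simp
      then show ?case using elim by (simp add: mult_left_mono)
    qed
  qed (use assms(1) in simp_all)
  ultimately show ?thesis unfolding G by simp
qed

lemma integrable_Delta_tail:
  assumes "t \<noteq> 0"
  shows "integrable \<mu>
    (\<lambda>y. indicator {a + 2 * Delta \<mu> x t..b} y * ((y - a) * exp (t * y * (2 * Delta \<mu> x t + a - y) / 2)))"
  using integrable_mult_indicator[OF _ integrable_sub_mult_exp_Delta[OF assms]]
  by (simp add: sets_eq_borel)

lemma integral_Delta_tail_le:
  assumes "0 < t" and "0 < Delta \<mu> x t"
  shows "(\<integral>y. indicator {a + 2 * Delta \<mu> x t..b} y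
      * ((y - a) * exp (t * y * (2 * Delta \<mu> x t + a - y) / 2)) \<partial>\<mu>)
    \<le> 4 * Delta \<mu> x t * measure \<mu> (space \<mu>) + (\<integral>y. (y - a) * exp (- t * y * (y - a) / 4) \<partial>\<mu>)"
proof -
  have "(\<integral>y. indicator {a + 2 * Delta \<mu> x t..b} y
      * ((y - a) * exp (t * y * (2 * Delta \<mu> x t + a - y) / 2)) \<partial>\<mu>)
    \<le> (\<integral>y. 4 * Delta \<mu> x t + (y - a) * exp (- t * y * (y - a) / 4) \<partial>\<mu>)"
  proof (rule integral_mono_AE)
    show "AE y in \<mu>. indicator {a + 2 * Delta \<mu> x t..b} y
        * ((y - a) * exp (t * y * (2 * Delta \<mu> x t + a - y) / 2))
      \<le> 4 * Delta \<mu> x t + (y - a) * exp (- t * y * (y - a) / 4)"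
      using AE_in_support
    proof eventually_elim
      case (elim y)
      then show ?case using mult_exp_shifted_le[of "Delta \<mu> x t" t y a] assms
        by (auto split: split_indicator intro: add_nonneg_nonneg)
    qed
  qed (use assms(1) integrable_Delta_tail integrable_decay_integrand in simp_all)
  then show ?thesis
    using integrable_decay_integrand[of t 4] assms(1) by (simp add: Bochner_Integration.integral_add mult_ac)
qed

lemma Gfun_bounds_of_Delta_pos:
  assumes "0 < t" and "0 < x" and "1 / (1 - \<gamma>) = b" and "0 < Delta \<mu> x t"
  shows "risk_tol \<mu> x t - a * x \<le> Gfun \<mu> \<gamma> x t
    \<and> Gfun \<mu> \<gamma> x t \<le> Delta \<mu> x t * (2 * x + 4 * measure \<mu> (space \<mu>))
        + (\<integral>y. (y - a) * exp (- t * y * (y - a) / 4) \<partial>\<mu>)"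
proof -
  define D where "D = Delta \<mu> x t"
  let ?E = "\<lambda>y. exp (t * y * (2 * D + a - y) / 2)"
  let ?G = "\<lambda>y. indicator {a + 2 * D..b} y * ((y - a) * ?E y)"
  have "t \<noteq> 0" using assms(1) by simp
  have int_E: "integrable \<mu> ?E" unfolding D_def by (rule integrable_exp_Delta[OF \<open>t \<noteq> 0\<close>])
  have int_G: "integrable \<mu> ?G" unfolding D_def by (rule integrable_Delta_tail[OF \<open>t \<noteq> 0\<close>])
  have G: "Gfun \<mu> \<gamma> x t = 2 * D * x + (\<integral>y. ?G y \<partial>\<mu>)"
    using assms(3,4) by (simp add: Gfun_def Let_def D_def set_lebesgue_integral_def)
  have "risk_tol \<mu> x t - a * x \<le> (\<integral>y. 2 * D * ?E y + ?G y \<partial>\<mu>)"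
    unfolding risk_tol_sub_eq[OF assms(1,2)] D_def[symmetric]
  proof (rule integral_mono_AE)
    show "AE y in \<mu>. (y - a) * ?E y \<le> 2 * D * ?E y + ?G y"
      using AE_in_support
    proof eventually_elim
      case (elim y)
      show ?case
      proof (cases "a + 2 * D \<le> y")
        case False
        then have "(y - a) * ?E y \<le> 2 * D * ?E y" by (intro mult_right_mono) auto
        then show ?thesis using False by simp
      qed (use elim assms(4) D_def in simp)
    qed
  qed (use int_E int_G integrable_sub_mult_exp_Delta[OF \<open>t \<noteq> 0\<close>] D_def in simp_all)
  also have "\<dots> = 2 * D * x + (\<integral>y. ?G y \<partial>\<mu>)"
    using int_E int_G integral_exp_Delta[OF assms(1,2)] by (simp add: D_def)
  finally show ?thesis
    using integral_Delta_tail_le[OF assms(1,4)] unfolding G D_def by (simp add: algebra_simps)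
qed

lemma Delta_eventually_less:
  assumes "0 < x" and "0 < \<delta>"
  shows "\<forall>\<^sub>F t in at_top. Delta \<mu> x t < \<delta>"
proof -
  obtain \<eta> where "0 < \<eta>" and "0 < measure \<mu> {\<eta>..a + \<delta>}"
    using measure_Icc_near_supp_left_pos[OF assms(2)] by auto
  define c where "c = measure \<mu> {\<eta>..a + \<delta>}"
  have "0 < c" by (simp add: c_def \<open>0 < measure \<mu> {\<eta>..a + \<delta>}\<close>)
  have "filterlim (\<lambda>t. c * exp (t * \<eta> * \<delta> / 2)) at_top at_top"
    using \<open>0 < \<eta>\<close> \<open>0 < c\<close> assms(2) by real_asymp
  then have "\<forall>\<^sub>F t in at_top. x < c * exp (t * \<eta> * \<delta> / 2)"
    by (simp add: filterlim_at_top_dense)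
  then show ?thesis using eventually_gt_at_top[of 0]
  proof eventually_elim
    case (elim t)
    show ?case
    proof (rule ccontr)
      assume "\<not> Delta \<mu> x t < \<delta>"
      have "c * exp (t * \<eta> * \<delta> / 2) \<le> hfun \<mu> (hinv \<mu> x t) t"
        unfolding c_def
      proof (rule hfun_ge_measure_mult_exp)
        fix y assume "\<eta> \<le> y" and "y \<le> a + \<delta>"
        then have "t * \<eta> * \<delta> \<le> t * y * (2 * Delta \<mu> x t + a - y)"
          using elim \<open>0 < \<eta>\<close> \<open>\<not> Delta \<mu> x t < \<delta>\<close> assms(2)
          by (intro mult_mono mult_left_mono) auto
        then show "t * \<eta> * \<delta> / 2 \<le> y * hinv \<mu> x t - y\<^sup>2 * t / 2"
          using elim by (simp add: hfun_exponent_Delta)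
      qed
      also have "\<dots> = x" using hfun_hinv elim assms(1) by simp
      finally show False using elim by simp
    qed
  qed
qed

lemma tendsto_decay_integral: "((\<lambda>t. \<integral>y. (y - a) * exp (- t * y * (y - a) / 4) \<partial>\<mu>) \<longlongrightarrow> 0) at_top"
proof (rule tendsto_integral_at_top_zero[where B="b - a"])
  show "AE y in \<mu>. ((\<lambda>t. (y - a) * exp (- t * y * (y - a) / 4)) \<longlongrightarrow> 0) at_top"
    using AE_in_support
  proof eventually_elim
    case (elim y)
    show ?case
    proof (cases "y = a")
      case False
      with elim have "0 < y" and "0 < y - a" by simp_all
      then show ?thesis by real_asymp
    qed simp
  qed
  show "AE y in \<mu>. \<bar>(y - a) * exp (- t * y * (y - a) / 4)\<bar> \<le> b - a" if "0 \<le> t" for t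
    using AE_in_support by eventually_elim (use decay_integrand_bound[OF that, of 4] in auto)
qed (simp add: borel_measurable_eq)

theorem risk_tol_asymptotics:
  assumes "0 < x" and "1 / (1 - \<gamma>) = b"
  shows "((\<lambda>t. risk_tol \<mu> x t / x) \<longlongrightarrow> a) at_top
    \<and> ((\<lambda>t. Gfun \<mu> \<gamma> x t) \<longlongrightarrow> 0) at_top
    \<and> (\<forall>\<^sub>F t in at_top. 0 \<le> risk_tol \<mu> x t - a * x \<and> risk_tol \<mu> x t - a * x \<le> Gfun \<mu> \<gamma> x t)"
proof -
  define J where "J t = (\<integral>y. (y - a) * exp (- t * y * (y - a) / 4) \<partial>\<mu>)" for t
  define K where "K = 2 * x + 4 * measure \<mu> (space \<mu>)"
  have bounds: "\<forall>\<^sub>F t in at_top. 0 \<le> risk_tol \<mu> x t - a * x \<and> risk_tol \<mu> x t - a * x \<le> Gfun \<mu> \<gamma> x t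
      \<and> Gfun \<mu> \<gamma> x t \<le> max (Delta \<mu> x t) 0 * K + J t"
    using eventually_gt_at_top[of 0]
  proof eventually_elim
    case (elim t)
    show ?case
    proof (cases "Delta \<mu> x t \<le> 0")
      case True
      then show ?thesis using risk_tol_sub_nonneg[OF elim assms(1)]
          Gfun_bounds_of_Delta_nonpos[OF elim assms True] by (simp add: J_def)
    next
      case False
      then show ?thesis using risk_tol_sub_nonneg[OF elim assms(1)]
          Gfun_bounds_of_Delta_pos[OF elim assms] by (simp add: J_def K_def)
    qed
  qed
  have "((\<lambda>t. max (Delta \<mu> x t) 0) \<longlongrightarrow> 0) at_top"
  proof (rule order_tendstoI)
    show "\<forall>\<^sub>F t in at_top. max (Delta \<mu> x t) 0 < e" if "0 < e" for e
      using Delta_eventually_less[OF assms(1) that] by eventually_elim (use that in auto)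
  qed (simp add: less_max_iff_disj)
  then have "((\<lambda>t. max (Delta \<mu> x t) 0 * K + J t) \<longlongrightarrow> 0 * K + 0) at_top"
    unfolding J_def by (intro tendsto_add tendsto_mult tendsto_const tendsto_decay_integral)
  then have upper_lim: "((\<lambda>t. max (Delta \<mu> x t) 0 * K + J t) \<longlongrightarrow> 0) at_top" by simp
  have "\<forall>\<^sub>F t in at_top. 0 \<le> Gfun \<mu> \<gamma> x t"
    and "\<forall>\<^sub>F t in at_top. Gfun \<mu> \<gamma> x t \<le> max (Delta \<mu> x t) 0 * K + J t"
    using bounds by (eventually_elim, linarith)+
  from tendsto_sandwich[OF this tendsto_const upper_lim]
  have G: "((\<lambda>t. Gfun \<mu> \<gamma> x t) \<longlongrightarrow> 0) at_top" .
  have lim_upper: "((\<lambda>t. a + Gfun \<mu> \<gamma> x t / x) \<longlongrightarrow> a) at_top"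
    using tendsto_add[OF tendsto_const tendsto_divide_zero[OF G], of a x] by simp
  have "\<forall>\<^sub>F t in at_top. a \<le> risk_tol \<mu> x t / x"
    and "\<forall>\<^sub>F t in at_top. risk_tol \<mu> x t / x \<le> a + Gfun \<mu> \<gamma> x t / x"
    using bounds by (eventually_elim, use assms(1) in \<open>simp add: le_divide_eq divide_le_eq distrib_right\<close>)+
  from tendsto_sandwich[OF this tendsto_const lim_upper]
  have R: "((\<lambda>t. risk_tol \<mu> x t / x) \<longlongrightarrow> a) at_top" .
  have "\<forall>\<^sub>F t in at_top. 0 \<le> risk_tol \<mu> x t - a * x \<and> risk_tol \<mu> x t - a * x \<le> Gfun \<mu> \<gamma> x t"
    using bounds by eventually_elim simp
  with G R show ?thesis by blast
qed

end

theorem theorem9: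
  fixes \<mu> :: "real measure" and \<gamma> :: real
  assumes sets_mu: "sets \<mu> = sets borel"
    and finite_mu: "finite_measure \<mu>"
    and supp_pos: "emeasure \<mu> {..0} = 0"
    and nonzero: "emeasure \<mu> (space \<mu>) \<noteq> 0"
    and integr: "\<And>z. integrable \<mu> (\<lambda>y. y * exp (y * z))"
    and gamma: "\<gamma> < 1"
    and right_end: "supp_right \<mu> = ereal (1 / (1 - \<gamma>))"
  shows "\<forall>x0>0.
     ((\<lambda>t. risk_tol \<mu> x0 t / x0) \<longlongrightarrow> supp_left \<mu>) at_top
   \<and> ((\<lambda>t. Gfun \<mu> \<gamma> x0 t) \<longlongrightarrow> 0) at_top
   \<and> (\<forall>\<^sub>F t in at_top. 0 \<le> risk_tol \<mu> x0 t - supp_left \<mu> * x0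
                         \<and> risk_tol \<mu> x0 t - supp_left \<mu> * x0 \<le> Gfun \<mu> \<gamma> x0 t)"
proof -
  have "AE y in \<mu>. y \<notin> {..0}"
    using supp_pos sets_mu by (intro AE_not_in null_setsI) simp_all
  moreover have "AE y in \<mu>. y \<le> 1 / (1 - \<gamma>)"
    by (rule AE_le_supp_right[OF sets_mu right_end])
  ultimately have "AE y in \<mu>. 0 < y \<and> y \<le> 1 / (1 - \<gamma>)" by eventually_elim auto
  then interpret positive_bounded_support \<mu> "1 / (1 - \<gamma>)"
    by (intro positive_bounded_support.intro positive_bounded_support_axioms.intro
        finite_mu sets_mu nonzero)
  show ?thesis using risk_tol_asymptotics by blast
qed

end
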